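(* Under the standing assumptions, the following hold. (9) $\{M^{(1,2)}\}\subseteq\{C^{-1}B^{(1)}A^{-1}\}$; and $\{M^{(1,2)}\}\supseteq\{C^{-1}B^{(1)}A^{-1}\}\Leftrightarrow\{M^{(1,2)}\}=\{C^{-1}B^{(1)}A^{-1}\}\Leftrightarrow r(B)=m$ or $r(B)=n$. (10) $\{M^{(1,2)}\}=\{C^{-1}B^{(1,2)}A^{-1}\}$. (11) $\{M^{(1,2)}\}\cap\{C^{-1}B^{(1,3)}A^{-1}\}\neq\emptyset$; $\{M^{(1,2)}\}\supseteq\{C^{-1}B^{(1,3)}A^{-1}\}\Leftrightarrow r(B)=m$ or $r(B)=n$; $\{M^{(1,2)}\}\subseteq\{C^{-1}B^{(1,3)}A^{-1}\}\Leftrightarrow B=0$ or $r(B)=m$; $\{M^{(1,2)}\}=\{C^{-1}B^{(1,3)}A^{-1}\}\Leftrightarrow r(B)=m$. (12) $\{M^{(1,2)}\}\cap\{C^{-1}B^{(1,4)}A^{-1}\}\neq\emptyset$; $\{M^{(1,2)}\}\supseteq\{C^{-1}B^{(1,4)}A^{-1}\}\Leftrightarrow r(B)=m$ or $r(B)=n$; $\{M^{(1,2)}\}\subseteq\{C^{-1}B^{(1,4)}A^{-1}\}\Leftrightarrow B=0$ or $r(B)=n$; $\{M^{(1,2)}\}=\{C^{-1}B^{(1,4)}A^{-1}\}\Leftrightarrow r(B)=n$. (13) $\{M^{(1,2)}\}\supseteq\{C^{-1}B^{(1,2,3)}A^{-1}\}$; and $\{M^{(1,2)}\}\subseteq\{C^{-1}B^{(1,2,3)}A^{-1}\}\Leftrightarrow\{M^{(1,2)}\}=\{C^{-1}B^{(1,2,3)}A^{-1}\}\Leftrightarrow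 B=0$ or $r(B)=m$. (14) $\{M^{(1,2)}\}\supseteq\{C^{-1}B^{(1,2,4)}A^{-1}\}$; and $\{M^{(1,2)}\}\subseteq\{C^{-1}B^{(1,2,4)}A^{-1}\}\Leftrightarrow\{M^{(1,2)}\}=\{C^{-1}B^{(1,2,4)}A^{-1}\}\Leftrightarrow B=0$ or $r(B)=n$. (15) $\{M^{(1,2)}\}\cap\{C^{-1}B^{(1,3,4)}A^{-1}\}\neq\emptyset$; $\{M^{(1,2)}\}\supseteq\{C^{-1}B^{(1,3,4)}A^{-1}\}\Leftrightarrow r(B)=m$ or $r(B)=n$; $\{M^{(1,2)}\}\subseteq\{C^{-1}B^{(1,3,4)}A^{-1}\}\Leftrightarrow B=0$ or $r(B)=m=n$; $\{M^{(1,2)}\}=\{C^{-1}B^{(1,3,4)}A^{-1}\}\Leftrightarrow r(B)=m=n$. (16) $C^{-1}B^\dagger A^{-1}\in\{M^{(1,2)}\}$.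
   Context: Standing assumptions: $m,n\ge1$; $A\in\mathbb{C}^{m\times m}$ and $C\in\mathbb{C}^{n\times n}$ are nonsingular; $B\in\mathbb{C}^{m\times n}$; $M=ABC$. For a complex matrix $X$, $X^*$ is its conjugate transpose, $r(X)$ its rank and $\mathscr{R}(X)$ its column space. For $X\in\mathbb{C}^{p\times q}$, a matrix $G\in\mathbb{C}^{q\times p}$ is called an $\{i,\ldots,j\}$-generalized inverse of $X$ (written $X^{(i,\ldots,j)}$) if it satisfies the equations numbered $i,\ldots,j$ among the four Penrose equations (i) $XGX=X$, (ii) $GXG=G$, (iii) $(XG)^*=XG$, (iv) $(GX)^*=GX$; $\{X^{(i,\ldots,j)}\}$ denotes the set of all such $G$. The Moore–Penrose inverse $X^\dagger$ is the unique matrix satisfying all four equations. For a type $(k,\ldots,l)$, $\{C^{-1}B^{(k,\ldots,l)}A^{-1}\}:=\{C^{-1}GA^{-1}: G\in\{B^{(k,\ldots,l)}\}\}$. *)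

theory Defs
  imports "HOL-Analysis.Analysis"
begin

text \<open>Complex m x n matrices are rendered as complex^'n^'m (m = CARD('m) rows,
  n = CARD('n) columns).\<close>

definition cadj :: "complex^'n^'m \<Rightarrow> complex^'m^'n" where
  "cadj X = (\<chi> i j. cnj (X $ j $ i))"

text \<open>The set of all {i,...,j}-generalized inverses of X, where S is the set of
  the indices of the Penrose equations to be satisfied.\<close>
definition ginv :: "nat set \<Rightarrow> complex^'q^'p \<Rightarrow> (complex^'p^'q) set" where
  "ginv S X = {G. (1 \<in> S \<longrightarrow> X ** G ** X = X) \<and>
                  (2 \<in> S \<longrightarrow> G ** X ** G = G) \<and>
                  (3 \<in> S \<longrightarrow> cadj (X ** G) = X ** G) \<and>
                  (4 \<in> S \<longrightarrow> cadj (G ** X) = G ** X)}"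

definition mpinv :: "complex^'q^'p \<Rightarrow> complex^'p^'q" where
  "mpinv X = (THE G. G \<in> ginv {1,2,3,4} X)"

definition tset :: "complex^'m^'m \<Rightarrow> complex^'n^'m \<Rightarrow> complex^'n^'n \<Rightarrow> nat set
                    \<Rightarrow> (complex^'m^'n) set" where
  "tset A B C S = {matrix_inv C ** G ** matrix_inv A | G. G \<in> ginv S B}"

end

theory Submission
  imports Defs
begin

text \<open>Equations (1) and (2) are invariant under equivalence: \<open>G\<close> is a \<open>{1,2}\<close>-inverse of
  \<open>M = ABC\<close> iff \<open>CGA\<close> is one of \<open>B\<close>. As \<open>H \<mapsto> C\<^sup>-\<^sup>1 H A\<^sup>-\<^sup>1\<close> is injective, every comparison
  reduces to comparing the \<open>{1,2}\<close>-inverses of \<open>B\<close> with its \<open>S\<close>-inverses. If \<open>B\<close> has full row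
  (column) rank, every \<open>{1}\<close>-inverse is a right (left) inverse of \<open>B\<close> and hence also satisfies
  (2) and (3) ((2) and (4)). Otherwise \<open>B\<^sup>\<dagger>\<close> is perturbed by products with left and right
  annihilators of \<open>B\<close>, producing \<open>{1,3,4}\<close>-inverses that violate (2) and \<open>{1,2}\<close>-inverses that
  violate (3); the statements about (4) follow from those about (3) by conjugate transposition.\<close>

lemma matrix_add_rdistrib: "((B::'a::semiring_1^'n^'m) + C) ** A = B ** A + C ** A"
  by (vector matrix_matrix_mult_def sum.distrib[symmetric] algebra_simps)

lemma matrix_diff_ldistrib: "(A::'a::ring_1^'n^'m) ** (B - C) = A ** B - A ** C"
  by (vector matrix_matrix_mult_def sum_subtractf[symmetric] algebra_simps)

lemma matrix_diff_rdistrib: "((B::'a::ring_1^'n^'m) - C) ** A = B ** A - C ** A"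
  by (vector matrix_matrix_mult_def sum_subtractf[symmetric] algebra_simps)

lemma cadj_matrix_mult: "cadj (X ** Y) = cadj Y ** cadj X"
  by (simp add: cadj_def matrix_matrix_mult_def vec_eq_iff mult.commute)

lemma cadj_cadj [simp]: "cadj (cadj X) = X"
  by (simp add: cadj_def vec_eq_iff)

lemma cadj_inject [simp]: "cadj X = cadj Y \<longleftrightarrow> X = Y"
  by (metis cadj_cadj)

lemma cadj_add: "cadj (X + Y) = cadj X + cadj Y"
  by (simp add: cadj_def vec_eq_iff)

lemma cadj_mat1 [simp]: "cadj (mat 1) = mat 1"
  by (simp add: cadj_def vec_eq_iff mat_def)

lemma cadj_eq_0_iff [simp]: "cadj X = 0 \<longleftrightarrow> X = 0"
  by (auto simp: cadj_def vec_eq_iff)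

lemma mult_cadj_self_eq_0_iff: "X ** cadj X = 0 \<longleftrightarrow> X = 0"
proof
  assume X: "X ** cadj X = 0"
  have "X $ i $ j = 0" for i j
  proof -
    have "(X ** cadj X) $ i $ i = of_real (\<Sum>k\<in>UNIV. (cmod (X $ i $ k))\<^sup>2)"
      by (simp add: matrix_matrix_mult_def cadj_def complex_norm_square of_real_sum
          del: of_real_power)
    then have "(\<Sum>k\<in>UNIV. (cmod (X $ i $ k))\<^sup>2) = 0"
      using X by (metis of_real_eq_0_iff zero_index)
    then show ?thesis
      by (simp add: sum_nonneg_eq_0_iff)
  qed
  then show "X = 0" by (simp add: vec_eq_iff)
qed simp

lemma self_adjoint_nilpotent_eq_0:
  assumes "cadj D = D" "D ** D = 0"
  shows "D = 0"
  using assms mult_cadj_self_eq_0_iff[of D] by simp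

section \<open>Existence and uniqueness of the Moore--Penrose inverse\<close>

lemma inner_vec_complex: "inner (u::complex^'k) v = Re (\<Sum>i\<in>UNIV. u$i * cnj (v$i))"
  by (simp add: inner_vec_def inner_complex_def)

lemma inner_matrix_vector_cadj:
  fixes B :: "complex^'n^'m"
  shows "inner (B *v x) y = inner x (cadj B *v y)"
proof -
  have "(\<Sum>i\<in>UNIV. (B *v x)$i * cnj (y$i)) = (\<Sum>i\<in>UNIV. \<Sum>j\<in>UNIV. B$i$j * x$j * cnj (y$i))"
    by (simp add: matrix_vector_mult_def sum_distrib_right)
  also have "\<dots> = (\<Sum>j\<in>UNIV. \<Sum>i\<in>UNIV. B$i$j * x$j * cnj (y$i))"
    by (rule sum.swap)
  also have "\<dots> = (\<Sum>j\<in>UNIV. x$j * cnj ((cadj B *v y)$j))"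
    by (simp add: matrix_vector_mult_def cadj_def sum_distrib_left mult_ac)
  finally show ?thesis
    by (simp add: inner_vec_complex)
qed

lemma adjoint_matrix_vector_mult: "adjoint ((*v) (B::complex^'n^'m)) = (*v) (cadj B)"
  by (rule adjoint_unique) (simp add: inner_matrix_vector_cadj)

lemma range_eq_orthogonal_comp_ker_adjoint:
  fixes f :: "'a::euclidean_space \<Rightarrow> 'b::euclidean_space"
  assumes "linear f"
  shows "range f = (adjoint f -` {0})\<^sup>\<bottom>"
proof -
  have "adjoint f -` {0} = (range f)\<^sup>\<bottom>"
    using ker_orthogonal_comp_adjoint[of "adjoint f"]
    by (simp add: adjoint_linear adjoint_adjoint assms)
  moreover have "subspace (range f)"
    using assms linear_subspace_image subspace_UNIV by blast
  ultimately show ?thesis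
    by (simp add: orthogonal_comp_self)
qed

text \<open>The normal equations \<open>B\<^sup>* B X = B\<^sup>*\<close> are solvable, because \<open>B\<^sup>* B\<close> is self-adjoint
  with the same kernel as \<open>B\<close>, so its range is \<open>(ker B)\<^sup>\<bottom> = \<R>(B\<^sup>*)\<close>.\<close>

lemma ex_normal_equations_solution: "\<exists>X. cadj B ** B ** X = cadj (B::complex^'n^'m)"
proof -
  let ?S = "cadj B ** B"
  have ker: "B *v x = 0" if "?S *v x = 0" for x
  proof -
    have "inner (B *v x) (B *v x) = 0"
      using that by (simp add: inner_matrix_vector_cadj matrix_vector_mul_assoc)
    then show ?thesis by simp
  qed
  have "\<exists>x. ?S *v x = cadj B *v y" for y
  proof -
    have "range ((*v) ?S) = ((*v) ?S -` {0})\<^sup>\<bottom>"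
      using range_eq_orthogonal_comp_ker_adjoint[of "(*v) ?S"]
      by (simp add: adjoint_matrix_vector_mult cadj_matrix_mult)
    moreover have "inner x (cadj B *v y) = 0" if "?S *v x = 0" for x
      using ker[OF that] by (metis inner_matrix_vector_cadj inner_zero_left)
    ultimately have "cadj B *v y \<in> range ((*v) ?S)"
      by (auto simp: orthogonal_comp_def orthogonal_def)
    then show ?thesis by auto
  qed
  then have "\<forall>k. \<exists>x. ?S *v x = cadj B *v axis k 1"
    by blast
  then obtain col where col: "\<And>k. ?S *v col k = cadj B *v axis k 1"
    by metis
  have "?S ** (\<chi> i k. col k $ i) = cadj B"
  proof -
    have "(?S ** (\<chi> i k. col k $ i)) $ i $ j = (?S *v col j) $ i" for i j
      by (simp add: matrix_matrix_mult_def matrix_vector_mult_def)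
    moreover have "(cadj B *v axis j 1) $ i = cadj B $ i $ j" for i j
      by (simp add: matrix_vector_mult_def axis_def if_distrib cong: if_cong)
    ultimately show ?thesis
      by (simp add: vec_eq_iff col)
  qed
  then show ?thesis by blast
qed

lemma ginv_antimono: "S \<subseteq> T \<Longrightarrow> ginv T X \<subseteq> ginv S X"
  by (auto simp: ginv_def)

lemma ginv_Un: "ginv (S \<union> T) X = ginv S X \<inter> ginv T X"
  by (auto simp: ginv_def)

lemma cadj_mem_ginv_cadj_iff:
  "cadj G \<in> ginv {1,2} (cadj B) \<longleftrightarrow> G \<in> ginv {1,2} B"
  "cadj G \<in> ginv {1,3} (cadj B) \<longleftrightarrow> G \<in> ginv {1,4} B"
  "cadj G \<in> ginv {1,4} (cadj B) \<longleftrightarrow> G \<in> ginv {1,3} B"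
proof -
  have "cadj B ** cadj G ** cadj B = cadj (B ** G ** B)"
    and "cadj G ** cadj B ** cadj G = cadj (G ** B ** G)"
    and "cadj B ** cadj G = cadj (G ** B)"
    and "cadj G ** cadj B = cadj (B ** G)"
    by (simp_all add: cadj_matrix_mult matrix_mul_assoc)
  then show "cadj G \<in> ginv {1,2} (cadj B) \<longleftrightarrow> G \<in> ginv {1,2} B"
    and "cadj G \<in> ginv {1,3} (cadj B) \<longleftrightarrow> G \<in> ginv {1,4} B"
    and "cadj G \<in> ginv {1,4} (cadj B) \<longleftrightarrow> G \<in> ginv {1,3} B"
    by (auto simp: ginv_def)
qed

lemma ginv_13_nonempty: "\<exists>G. G \<in> ginv {1,3} (B::complex^'n^'m)"
proof -
  obtain X where X: "cadj B ** B ** X = cadj B"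
    using ex_normal_equations_solution by blast
  have XB: "cadj X ** cadj B ** B = B"
    using arg_cong[OF X, of cadj] by (simp add: cadj_matrix_mult matrix_mul_assoc)
  have "B ** X = cadj X ** (cadj B ** B ** X)"
    using XB by (simp add: matrix_mul_assoc)
  then have BX: "B ** X = cadj X ** cadj B"
    by (simp add: X)
  then have "cadj (B ** X) = B ** X"
    by (simp add: cadj_matrix_mult)
  moreover have "B ** X ** B = B"
    using BX XB by (simp add: matrix_mul_assoc)
  ultimately show ?thesis
    by (auto simp: ginv_def)
qed

lemma ginv_14_nonempty: "\<exists>G. G \<in> ginv {1,4} (B::complex^'n^'m)"
proof -
  obtain H where "H \<in> ginv {1,3} (cadj B)"
    using ginv_13_nonempty by blast
  then have "cadj H \<in> ginv {1,4} B"
    using cadj_mem_ginv_cadj_iff(2)[of "cadj H" B] by simp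
  then show ?thesis ..
qed

lemma ginv_1234_unique:
  assumes "G \<in> ginv {1,2,3,4} B" "H \<in> ginv {1,2,3,4} B"
  shows "G = H"
proof -
  from assms have g: "B ** G ** B = B" "G ** B ** G = G" "cadj (B ** G) = B ** G" "cadj (G ** B) = G ** B"
    and h: "B ** H ** B = B" "H ** B ** H = H" "cadj (B ** H) = B ** H" "cadj (H ** B) = H ** B"
    by (simp_all add: ginv_def)
  have "G = G ** cadj (B ** G)" using g(2,3) by (simp add: matrix_mul_assoc)
  also have "\<dots> = G ** cadj (B ** H ** B ** G)" using h(1) by simp
  also have "\<dots> = G ** cadj (B ** G) ** cadj (B ** H)"
    by (simp add: cadj_matrix_mult matrix_mul_assoc)
  also have "\<dots> = G ** B ** H" using g(2,3) h(3) by (simp add: matrix_mul_assoc)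
  finally have G: "G = G ** B ** H" .
  have "H = cadj (H ** B) ** H" using h(2,4) by simp
  also have "\<dots> = cadj (H ** (B ** G ** B)) ** H" using g(1) by simp
  also have "\<dots> = cadj (G ** B) ** cadj (H ** B) ** H"
    by (simp add: cadj_matrix_mult matrix_mul_assoc)
  also have "\<dots> = G ** B ** (H ** B ** H)" using g(4) h(4) by (simp add: matrix_mul_assoc)
  also have "\<dots> = G ** B ** H" using h(2) by simp
  finally show ?thesis using G by simp
qed

lemma ginv_1234_nonempty: "\<exists>G. G \<in> ginv {1,2,3,4} (B::complex^'n^'m)"
proof -
  obtain G3 where G3: "B ** G3 ** B = B" "cadj (B ** G3) = B ** G3"
    using ginv_13_nonempty by (auto simp: ginv_def)
  obtain G4 where G4: "B ** G4 ** B = B" "cadj (G4 ** B) = G4 ** B"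
    using ginv_14_nonempty by (auto simp: ginv_def)
  let ?G = "G4 ** B ** G3"
  have BG: "B ** ?G = B ** G3"
    using G4(1) by (simp add: matrix_mul_assoc)
  have GB: "?G ** B = G4 ** B"
    using G3(1) by (metis matrix_mul_assoc)
  have "?G ** B ** ?G = ?G"
    using GB G4(1) by (metis matrix_mul_assoc)
  then have "?G \<in> ginv {1,2,3,4} B"
    using G3 G4 BG GB by (simp add: ginv_def)
  then show ?thesis ..
qed

lemma mpinv_mem_ginv: "mpinv B \<in> ginv S (B::complex^'n^'m)"
proof -
  obtain G where G: "G \<in> ginv {1,2,3,4} B"
    using ginv_1234_nonempty by blast
  then have "mpinv B \<in> ginv {1,2,3,4} B"
    unfolding mpinv_def by (rule theI) (use G ginv_1234_unique in blast)
  then show ?thesis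
    by (simp add: ginv_def)
qed

lemma ginv_Int_ginv_nonempty: "ginv S B \<inter> ginv T (B::complex^'n^'m) \<noteq> {}"
  using mpinv_mem_ginv by blast

section \<open>Full rank and one-sided inverses\<close>

lemma inj_if_independent_family:
  fixes v :: "'i::finite \<Rightarrow> 'a::field^'n"
  assumes indep: "\<And>c. (\<Sum>i\<in>UNIV. c i *s v i) = 0 \<Longrightarrow> (\<forall>i. c i = 0)"
  shows "inj v"
proof (rule injI, rule ccontr)
  fix i j assume eq: "v i = v j" and "i \<noteq> j"
  define c where "c k = (if k = i then 1 else if k = j then -1 else (0::'a))" for k
  have "(\<Sum>k\<in>UNIV. c k *s v k) =
      (\<Sum>k\<in>UNIV. (if k = i then v i else 0) - (if k = j then v j else 0))"
    by (rule sum.cong) (auto simp: c_def \<open>i \<noteq> j\<close>)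
  also have "\<dots> = 0"
    by (simp add: sum_subtractf eq)
  finally have "c i = 0"
    using indep by blast
  then show False
    by (simp add: c_def)
qed

lemma dim_range_eq_card_iff_independent_family:
  fixes v :: "'i::finite \<Rightarrow> 'a::field^'n"
  shows "vec.dim (range v) = CARD('i) \<longleftrightarrow> (\<forall>c. (\<Sum>i\<in>UNIV. c i *s v i) = 0 \<longrightarrow> (\<forall>i. c i = 0))"
proof
  assume dim: "vec.dim (range v) = CARD('i)"
  have "vec.dim (range v) \<le> card (range v)"
    by (rule vec.dim_le_card[OF vec.span_superset]) simp
  moreover have "card (range v) \<le> CARD('i)"
    by (rule card_image_le) simp
  ultimately have card: "card (range v) = CARD('i)" and card_dim: "card (range v) = vec.dim (range v)"
    using dim by linarith+
  have ind: "vec.independent (range v)"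
    using vec.card_eq_dim[OF order.refl card_dim] vec.span_superset by simp
  have inj: "inj v"
    using card by (simp add: inj_on_iff_eq_card)
  show "\<forall>c. (\<Sum>i\<in>UNIV. c i *s v i) = 0 \<longrightarrow> (\<forall>i. c i = 0)"
  proof (intro allI impI)
    fix c :: "'i \<Rightarrow> 'a" and i
    assume "(\<Sum>i\<in>UNIV. c i *s v i) = 0"
    then have "(\<Sum>w\<in>range v. c (inv v w) *s w) = 0"
      by (simp add: sum.reindex[OF inj] inv_f_f[OF inj])
    then have "c (inv v (v i)) = 0"
      using ind[unfolded vec.independent_explicit, THEN conjunct2, rule_format,
          of "\<lambda>w. c (inv v w)" "v i"] by simp
    then show "c i = 0"
      by (simp add: inv_f_f[OF inj])
  qed
next
  assume indep: "\<forall>c. (\<Sum>i\<in>UNIV. c i *s v i) = 0 \<longrightarrow> (\<forall>i. c i = 0)"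
  then have inj: "inj v"
    by (intro inj_if_independent_family) blast
  have "vec.independent (range v)"
    unfolding vec.independent_explicit
  proof (intro conjI allI impI ballI)
    fix d w assume "(\<Sum>w\<in>range v. d w *s w) = 0" and "w \<in> range v"
    then show "d w = 0"
      using indep[rule_format, of "\<lambda>i. d (v i)"] by (auto simp: sum.reindex[OF inj])
  qed simp
  then show "vec.dim (range v) = CARD('i)"
    by (simp add: vec.dim_eq_card_independent card_image[OF inj])
qed

lemma rank_eq_ncols_iff_left_invertible:
  "rank (B::'a::field^'n^'m) = CARD('n) \<longleftrightarrow> (\<exists>L. L ** B = mat 1)"
  unfolding matrix_left_invertible_span_rows_gen row_rank_def_gen
  by (metis vec.dim_eq_full vec.dimension_def card_cart_basis)

lemma rank_eq_nrows_iff_right_invertible: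
  "rank (B::'a::field^'n^'m) = CARD('m) \<longleftrightarrow> (\<exists>R. B ** R = mat 1)"
proof -
  have "rows B = range (\<lambda>i. row i B)"
    by (auto simp: rows_def)
  then show ?thesis
    by (simp add: matrix_right_invertible_independent_rows row_rank_def_gen
        dim_range_eq_card_iff_independent_family)
qed

lemma rank_zero_matrix: "rank (0::'a::field^'n^'m) = 0"
proof -
  have "rows (0::'a^'n^'m) = {0}"
    by (auto simp: rows_def row_def vec_eq_iff)
  then show ?thesis
    by (simp add: row_rank_def_gen)
qed

lemma nonzero_if_full_rank:
  fixes B :: "'a::field^'n^'m"
  assumes "rank B = CARD('m) \<or> rank B = CARD('n)"
  shows "B \<noteq> 0"
  using assms by (auto simp: rank_zero_matrix)

lemma rank_cadj_eq_ncols_iff: "rank (cadj B) = CARD('n) \<longleftrightarrow> rank (B::complex^'n^'m) = CARD('n)"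
proof -
  have "cadj B ** R = mat 1 \<longleftrightarrow> cadj R ** B = mat 1" for R
    by (metis cadj_inject cadj_mat1 cadj_cadj cadj_matrix_mult)
  then have "(\<exists>R. cadj B ** R = mat 1) \<longleftrightarrow> (\<exists>L. L ** B = mat 1)"
    by (metis cadj_cadj)
  then show ?thesis
    by (simp add: rank_eq_ncols_iff_left_invertible rank_eq_nrows_iff_right_invertible)
qed

section \<open>Comparing \<open>{1,2}\<close>-inverses with other classes\<close>

lemma ex_middle_factor_nonzero:
  fixes P :: "'a::{semiring_1,semiring_no_zero_divisors}^'k^'i" and Q :: "'a^'l^'j"
  assumes "P \<noteq> 0" "Q \<noteq> 0"
  shows "\<exists>U. P ** U ** Q \<noteq> 0"
proof -
  obtain i j where p: "P $ i $ j \<noteq> 0"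
    using assms(1) by (metis vec_eq_iff zero_index)
  obtain k l where q: "Q $ k $ l \<noteq> 0"
    using assms(2) by (metis vec_eq_iff zero_index)
  define U where "U = (\<chi> a b. if a = j \<and> b = k then (1::'a) else 0)"
  have PU: "(P ** U) $ i $ b = (if b = k then P $ i $ j else 0)" for b
    by (simp add: matrix_matrix_mult_def U_def if_distrib cong: if_cong)
  have "(P ** U ** Q) $ i $ l = P $ i $ j * Q $ k $ l"
    by (simp add: matrix_matrix_mult_def[of "P ** U"] PU if_distrib[of "\<lambda>x. x * _"] cong: if_cong)
  with p q have "(P ** U ** Q) $ i $ l \<noteq> 0"
    by simp
  then show ?thesis
    by (metis zero_index)
qed

lemma ex_left_annihilator:
  fixes B :: "complex^'n^'m"
  assumes "rank B \<noteq> CARD('m)"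
  shows "\<exists>Q::complex^'m^'m. Q \<noteq> 0 \<and> Q ** B = 0"
proof (intro exI conjI)
  have "B ** mpinv B ** B = B"
    using mpinv_mem_ginv[of B "{1}"] by (simp add: ginv_def)
  then show "(mat 1 - B ** mpinv B) ** B = 0"
    by (simp add: matrix_diff_rdistrib)
  show "mat 1 - B ** mpinv B \<noteq> 0"
    using assms by (auto simp: rank_eq_nrows_iff_right_invertible)
qed

lemma ex_right_annihilator:
  fixes B :: "complex^'n^'m"
  assumes "rank B \<noteq> CARD('n)"
  shows "\<exists>P::complex^'n^'n. P \<noteq> 0 \<and> B ** P = 0"
proof (intro exI conjI)
  have "B ** mpinv B ** B = B"
    using mpinv_mem_ginv[of B "{1}"] by (simp add: ginv_def)
  then show "B ** (mat 1 - mpinv B ** B) = 0"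
    by (simp add: matrix_diff_ldistrib matrix_mul_assoc)
  show "mat 1 - mpinv B ** B \<noteq> 0"
    using assms by (auto simp: rank_eq_ncols_iff_left_invertible)
qed

lemma right_inverse_if_ginv_1:
  assumes "B ** R = mat 1" "B ** G ** B = B"
  shows "B ** G = mat (1::'a::semiring_1)"
proof -
  have "B ** G = B ** G ** (B ** R)"
    using assms(1) by simp
  also have "\<dots> = mat 1"
    using assms by (metis matrix_mul_assoc)
  finally show ?thesis .
qed

lemma left_inverse_if_ginv_1:
  assumes "L ** B = mat 1" "B ** G ** B = B"
  shows "G ** B = mat (1::'a::semiring_1)"
proof -
  have "G ** B = L ** B ** G ** B"
    using assms(1) by simp
  also have "\<dots> = mat 1"
    using assms by (metis matrix_mul_assoc)
  finally show ?thesis .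
qed

lemma ginv_1_subset_ginv_2_if_full_rank:
  fixes B :: "complex^'n^'m"
  assumes "rank B = CARD('m) \<or> rank B = CARD('n)"
  shows "ginv {1} B \<subseteq> ginv {2} B"
proof
  fix G assume "G \<in> ginv {1} B"
  then have G: "B ** G ** B = B"
    by (simp add: ginv_def)
  from assms have "G ** B ** G = G"
  proof
    assume "rank B = CARD('m)"
    then have "B ** G = mat 1"
      using G right_inverse_if_ginv_1 by (metis rank_eq_nrows_iff_right_invertible)
    then show ?thesis
      by (simp flip: matrix_mul_assoc)
  next
    assume "rank B = CARD('n)"
    then have "G ** B = mat 1"
      using G left_inverse_if_ginv_1 by (metis rank_eq_ncols_iff_left_invertible)
    then show ?thesis
      by simp
  qed
  then show "G \<in> ginv {2} B"
    by (simp add: ginv_def)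
qed

text \<open>Perturbing \<open>B\<^sup>\<dagger>\<close> by a nonzero \<open>W\<close> with \<open>BW = 0\<close> and \<open>WB = 0\<close> keeps \<open>BG\<close> and \<open>GB\<close>, hence
  equations (1), (3), (4), but \<open>GBG = B\<^sup>\<dagger> \<noteq> G\<close>.\<close>

lemma ex_ginv_134_not_ginv_2:
  fixes B :: "complex^'n^'m"
  assumes "rank B \<noteq> CARD('m)" "rank B \<noteq> CARD('n)"
  shows "\<exists>G\<in>ginv {1,3,4} B. G \<notin> ginv {2} B"
proof -
  obtain Q :: "complex^'m^'m" where Q: "Q \<noteq> 0" "Q ** B = 0"
    using ex_left_annihilator[OF assms(1)] by blast
  obtain P :: "complex^'n^'n" where P: "P \<noteq> 0" "B ** P = 0"
    using ex_right_annihilator[OF assms(2)] by blast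
  obtain U where W: "P ** U ** Q \<noteq> 0"
    using ex_middle_factor_nonzero[OF P(1) Q(1)] by blast
  define X where "X = mpinv B"
  have X: "X \<in> ginv {1,2,3,4} B"
    unfolding X_def by (rule mpinv_mem_ginv)
  define G where "G = X + P ** U ** Q"
  have BG: "B ** G = B ** X"
    by (simp add: G_def matrix_add_ldistrib matrix_mul_assoc P)
  have GB: "G ** B = X ** B"
    by (simp add: G_def matrix_add_rdistrib Q flip: matrix_mul_assoc)
  have "G ** B ** G = X"
    using X by (simp add: GB ginv_def flip: BG matrix_mul_assoc)
  then have "G \<notin> ginv {2} B"
    using W by (simp add: ginv_def G_def)
  moreover have "G \<in> ginv {1,3,4} B"
    using X by (simp add: ginv_def BG GB)
  ultimately show ?thesis
    by blast
qed

lemma ginv_subset_ginv_12_iff: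
  fixes B :: "complex^'n^'m"
  assumes "1 \<in> S" "S \<subseteq> {1,3,4}"
  shows "ginv S B \<subseteq> ginv {1,2} B \<longleftrightarrow> rank B = CARD('m) \<or> rank B = CARD('n)"
proof
  assume "ginv S B \<subseteq> ginv {1,2} B"
  moreover have "ginv {1,3,4} B \<subseteq> ginv S B"
    using assms(2) by (rule ginv_antimono)
  moreover have "ginv {1,2} B \<subseteq> ginv {2} B"
    by (rule ginv_antimono) simp
  ultimately show "rank B = CARD('m) \<or> rank B = CARD('n)"
    using ex_ginv_134_not_ginv_2 by blast
next
  assume "rank B = CARD('m) \<or> rank B = CARD('n)"
  then have "ginv {1} B \<subseteq> ginv {2} B"
    by (rule ginv_1_subset_ginv_2_if_full_rank)
  moreover have "ginv S B \<subseteq> ginv {1} B"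
    using assms(1) by (intro ginv_antimono) simp
  ultimately show "ginv S B \<subseteq> ginv {1,2} B"
    using ginv_Un[of "{1}" "{2}" B] by (simp add: insert_commute)
qed

text \<open>Here the perturbation \<open>D = BUQ\<close> with \<open>QB = 0\<close> keeps \<open>GB\<close> but adds \<open>D\<close> to \<open>BG\<close>;
  if \<open>BG\<close> stayed Hermitian, so would \<open>D\<close>, and then \<open>D D\<^sup>* = D D = 0\<close> forces \<open>D = 0\<close>.\<close>

lemma ex_ginv_12_not_ginv_3:
  fixes B :: "complex^'n^'m"
  assumes "B \<noteq> 0" "rank B \<noteq> CARD('m)"
  shows "\<exists>G\<in>ginv {1,2} B. G \<notin> ginv {3} B"
proof -
  obtain Q :: "complex^'m^'m" where Q: "Q \<noteq> 0" "Q ** B = 0"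
    using ex_left_annihilator[OF assms(2)] by blast
  obtain U where "B ** U ** Q \<noteq> 0"
    using ex_middle_factor_nonzero[OF assms(1) Q(1)] by blast
  define D where "D = B ** U ** Q"
  have D: "D \<noteq> 0"
    using \<open>B ** U ** Q \<noteq> 0\<close> by (simp add: D_def)
  have DB: "D ** B = 0"
    by (simp add: D_def Q flip: matrix_mul_assoc)
  have "D ** D = B ** U ** (Q ** B) ** U ** Q"
    by (simp add: D_def matrix_mul_assoc)
  then have DD: "D ** D = 0"
    by (simp add: Q)
  define X where "X = mpinv B"
  have X: "B ** X ** B = B" "X ** B ** X = X" "cadj (B ** X) = B ** X"
    using mpinv_mem_ginv[of B "{1,2,3}"] by (simp_all add: ginv_def X_def)
  define G where "G = X + X ** D"
  have GB: "G ** B = X ** B"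
    by (simp add: G_def matrix_add_rdistrib DB flip: matrix_mul_assoc)
  have BG: "B ** G = B ** X + D"
    using X(1) by (simp add: G_def D_def matrix_add_ldistrib matrix_mul_assoc)
  have "B ** G ** B = B"
    by (simp add: BG matrix_add_rdistrib DB X(1))
  moreover have "G ** B ** G = G"
  proof -
    have "G ** B ** G = X ** (B ** X + D)"
      by (metis BG GB matrix_mul_assoc)
    also have "\<dots> = G"
      by (simp add: matrix_add_ldistrib matrix_mul_assoc X(2) G_def)
    finally show ?thesis .
  qed
  moreover have "cadj (B ** G) \<noteq> B ** G"
  proof
    assume "cadj (B ** G) = B ** G"
    then have "cadj D = D"
      using X(3) by (simp add: BG cadj_add)
    with DD D show False
      using self_adjoint_nilpotent_eq_0 by blast
  qed
  ultimately show ?thesis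
    by (auto simp: ginv_def)
qed

lemma ginv_12_subset_ginv_13_iff:
  fixes B :: "complex^'n^'m"
  shows "ginv {1,2} B \<subseteq> ginv {1,3} B \<longleftrightarrow> B = 0 \<or> rank B = CARD('m)"
proof
  assume "ginv {1,2} B \<subseteq> ginv {1,3} B"
  moreover have "ginv {1,3} B \<subseteq> ginv {3} B"
    by (rule ginv_antimono) simp
  ultimately show "B = 0 \<or> rank B = CARD('m)"
    using ex_ginv_12_not_ginv_3 by blast
next
  assume "B = 0 \<or> rank B = CARD('m)"
  then show "ginv {1,2} B \<subseteq> ginv {1,3} B"
  proof
    assume "B = 0"
    then show ?thesis
      by (auto simp: ginv_def)
  next
    assume "rank B = CARD('m)"
    then obtain R where R: "B ** R = mat 1"
      by (auto simp: rank_eq_nrows_iff_right_invertible)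
    show ?thesis
    proof
      fix G assume "G \<in> ginv {1,2} B"
      then have "B ** G ** B = B"
        by (simp add: ginv_def)
      with R have "B ** G = mat 1"
        by (rule right_inverse_if_ginv_1)
      with \<open>B ** G ** B = B\<close> show "G \<in> ginv {1,3} B"
        by (simp add: ginv_def)
    qed
  qed
qed

lemma ginv_12_subset_ginv_14_iff:
  fixes B :: "complex^'n^'m"
  shows "ginv {1,2} B \<subseteq> ginv {1,4} B \<longleftrightarrow> B = 0 \<or> rank B = CARD('n)"
proof -
  have "G \<in> ginv {1,2} (cadj B) \<longleftrightarrow> cadj G \<in> ginv {1,2} B"
    and "G \<in> ginv {1,3} (cadj B) \<longleftrightarrow> cadj G \<in> ginv {1,4} B" for G
    using cadj_mem_ginv_cadj_iff(1,2)[of "cadj G" B] by simp_all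
  then have "ginv {1,2} B \<subseteq> ginv {1,4} B \<longleftrightarrow> ginv {1,2} (cadj B) \<subseteq> ginv {1,3} (cadj B)"
    by (simp add: subset_iff) (metis cadj_cadj)
  also have "\<dots> \<longleftrightarrow> B = 0 \<or> rank B = CARD('n)"
    using ginv_12_subset_ginv_13_iff[of "cadj B"] by (simp add: rank_cadj_eq_ncols_iff)
  finally show ?thesis .
qed

section \<open>Equivalence transformations\<close>

lemma matrix_inv_inverse:
  assumes "invertible A"
  shows "A ** matrix_inv A = mat 1" "matrix_inv A ** A = mat 1"
  using someI_ex[OF assms[unfolded invertible_def]] by (simp_all add: matrix_inv_def)

lemma invertible_matrix_inv: "invertible A \<Longrightarrow> invertible (matrix_inv A)"
  using matrix_inv_inverse invertible_def by blast

lemma matrix_inv_conjugate_cancel: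
  assumes A: "invertible A" and C: "invertible C"
  shows "matrix_inv C ** (C ** G ** A) ** matrix_inv A = G"
    and "C ** (matrix_inv C ** H ** matrix_inv A) ** A = H"
  by (simp_all add: matrix_mul_assoc matrix_inv_inverse[OF C])
     (simp_all add: matrix_inv_inverse[OF A] flip: matrix_mul_assoc)

lemma invertible_mult_cancel_iff:
  fixes A :: "'a::semiring_1^'m^'m" and C :: "'a^'n^'n"
  assumes "invertible A" "invertible C"
  shows "A ** X ** C = A ** Y ** C \<longleftrightarrow> X = Y"
proof
  obtain A' C' where "A' ** A = mat 1" "C ** C' = mat 1"
    using assms by (auto simp: invertible_def)
  then have "A' ** (A ** Z ** C) ** C' = Z" for Z
    by (simp add: matrix_mul_assoc) (simp flip: matrix_mul_assoc)
  then show "A ** X ** C = A ** Y ** C \<Longrightarrow> X = Y"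
    by metis
qed simp

lemma mem_ginv_12_equivalent_iff:
  fixes A :: "complex^'m^'m" and B :: "complex^'n^'m" and C :: "complex^'n^'n"
  assumes A: "invertible A" and C: "invertible C"
  shows "G \<in> ginv {1,2} (A ** B ** C) \<longleftrightarrow> C ** G ** A \<in> ginv {1,2} B"
proof -
  let ?H = "C ** G ** A"
  have G: "G = matrix_inv C ** ?H ** matrix_inv A"
    using matrix_inv_conjugate_cancel(1)[OF A C] by simp
  have "A ** B ** C ** G ** (A ** B ** C) = A ** (B ** ?H ** B) ** C"
    by (simp add: matrix_mul_assoc)
  then have 1: "A ** B ** C ** G ** (A ** B ** C) = A ** B ** C \<longleftrightarrow> B ** ?H ** B = B"
    using invertible_mult_cancel_iff[OF A C] by (metis matrix_mul_assoc)
  have "G ** (A ** B ** C) ** G = matrix_inv C ** (?H ** B ** ?H) ** matrix_inv A"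
    by (simp add: matrix_mul_assoc matrix_inv_inverse[OF C])
       (simp add: matrix_inv_inverse[OF A] flip: matrix_mul_assoc)
  then have 2: "G ** (A ** B ** C) ** G = G \<longleftrightarrow> ?H ** B ** ?H = ?H"
    using invertible_mult_cancel_iff[OF invertible_matrix_inv[OF C] invertible_matrix_inv[OF A]] G
    by metis
  show ?thesis
    using 1 2 by (simp add: ginv_def)
qed

lemma ginv_12_equivalent:
  fixes A :: "complex^'m^'m" and B :: "complex^'n^'m" and C :: "complex^'n^'n"
  assumes "invertible A" "invertible C"
  shows "ginv {1,2} (A ** B ** C) = (\<lambda>H. matrix_inv C ** H ** matrix_inv A) ` ginv {1,2} B"
  using mem_ginv_12_equivalent_iff[OF assms] matrix_inv_conjugate_cancel[OF assms]
  by (auto simp: image_iff) metis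

theorem theorem4p2:
  fixes A :: "complex^'m^'m" and B :: "complex^'n^'m" and C :: "complex^'n^'n"
    and M :: "complex^'n^'m"
  assumes invA: "invertible A" and invC: "invertible C" and M: "M = A ** B ** C"
  shows
    \<comment> \<open>(9)\<close>
    "(ginv {1,2} M \<subseteq> tset A B C {1} \<and>
      (tset A B C {1} \<subseteq> ginv {1,2} M \<longleftrightarrow> ginv {1,2} M = tset A B C {1}) \<and>
      (ginv {1,2} M = tset A B C {1} \<longleftrightarrow> rank B = CARD('m) \<or> rank B = CARD('n)))
    \<and> \<comment> \<open>(10)\<close>
     ginv {1,2} M = tset A B C {1,2}
    \<and> \<comment> \<open>(11)\<close>
     (ginv {1,2} M \<inter> tset A B C {1,3} \<noteq> {} \<and>
      (tset A B C {1,3} \<subseteq> ginv {1,2} M \<longleftrightarrow> rank B = CARD('m) \<or> rank B = CARD('n)) \<and>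
      (ginv {1,2} M \<subseteq> tset A B C {1,3} \<longleftrightarrow> B = 0 \<or> rank B = CARD('m)) \<and>
      (ginv {1,2} M = tset A B C {1,3} \<longleftrightarrow> rank B = CARD('m)))
    \<and> \<comment> \<open>(12)\<close>
     (ginv {1,2} M \<inter> tset A B C {1,4} \<noteq> {} \<and>
      (tset A B C {1,4} \<subseteq> ginv {1,2} M \<longleftrightarrow> rank B = CARD('m) \<or> rank B = CARD('n)) \<and>
      (ginv {1,2} M \<subseteq> tset A B C {1,4} \<longleftrightarrow> B = 0 \<or> rank B = CARD('n)) \<and>
      (ginv {1,2} M = tset A B C {1,4} \<longleftrightarrow> rank B = CARD('n)))
    \<and> \<comment> \<open>(13)\<close>
     (tset A B C {1,2,3} \<subseteq> ginv {1,2} M \<and>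
      (ginv {1,2} M \<subseteq> tset A B C {1,2,3} \<longleftrightarrow> ginv {1,2} M = tset A B C {1,2,3}) \<and>
      (ginv {1,2} M = tset A B C {1,2,3} \<longleftrightarrow> B = 0 \<or> rank B = CARD('m)))
    \<and> \<comment> \<open>(14)\<close>
     (tset A B C {1,2,4} \<subseteq> ginv {1,2} M \<and>
      (ginv {1,2} M \<subseteq> tset A B C {1,2,4} \<longleftrightarrow> ginv {1,2} M = tset A B C {1,2,4}) \<and>
      (ginv {1,2} M = tset A B C {1,2,4} \<longleftrightarrow> B = 0 \<or> rank B = CARD('n)))
    \<and> \<comment> \<open>(15)\<close>
     (ginv {1,2} M \<inter> tset A B C {1,3,4} \<noteq> {} \<and>
      (tset A B C {1,3,4} \<subseteq> ginv {1,2} M \<longleftrightarrow> rank B = CARD('m) \<or> rank B = CARD('n)) \<and>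
      (ginv {1,2} M \<subseteq> tset A B C {1,3,4} \<longleftrightarrow>
         B = 0 \<or> (rank B = CARD('m) \<and> CARD('m) = CARD('n))) \<and>
      (ginv {1,2} M = tset A B C {1,3,4} \<longleftrightarrow> rank B = CARD('m) \<and> CARD('m) = CARD('n)))
    \<and> \<comment> \<open>(16)\<close>
     matrix_inv C ** mpinv B ** matrix_inv A \<in> ginv {1,2} M"
proof -
  let ?f = "\<lambda>G. matrix_inv C ** G ** matrix_inv A"
  have inj: "inj ?f"
    using invertible_mult_cancel_iff[OF invertible_matrix_inv[OF invC] invertible_matrix_inv[OF invA]]
    by (auto intro: injI)
  have M12: "ginv {1,2} M = ?f ` ginv {1,2} B"
    unfolding M by (rule ginv_12_equivalent[OF invA invC])
  have tset: "tset A B C S = ?f ` ginv S B" for S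
    by (auto simp: tset_def)
  have "ginv {1,2,3} B = ginv {1,2} B \<inter> ginv {1,3} B"
    and "ginv {1,2,4} B = ginv {1,2} B \<inter> ginv {1,4} B"
    and "ginv {1,3,4} B = ginv {1,3} B \<inter> ginv {1,4} B"
    by (auto simp: ginv_def)
  then have Int_iffs:
    "ginv {1,2} B \<subseteq> ginv {1,2,3} B \<longleftrightarrow> ginv {1,2} B \<subseteq> ginv {1,3} B"
    "ginv {1,2} B \<subseteq> ginv {1,2,4} B \<longleftrightarrow> ginv {1,2} B \<subseteq> ginv {1,4} B"
    "ginv {1,2} B \<subseteq> ginv {1,3,4} B \<longleftrightarrow> ginv {1,2} B \<subseteq> ginv {1,3} B \<and> ginv {1,2} B \<subseteq> ginv {1,4} B"
    by blast+
  have full_rank_iffs: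
    "ginv {1} B \<subseteq> ginv {1,2} B \<longleftrightarrow> rank B = CARD('m) \<or> rank B = CARD('n)"
    "ginv {1,3} B \<subseteq> ginv {1,2} B \<longleftrightarrow> rank B = CARD('m) \<or> rank B = CARD('n)"
    "ginv {1,4} B \<subseteq> ginv {1,2} B \<longleftrightarrow> rank B = CARD('m) \<or> rank B = CARD('n)"
    "ginv {1,3,4} B \<subseteq> ginv {1,2} B \<longleftrightarrow> rank B = CARD('m) \<or> rank B = CARD('n)"
    by (rule ginv_subset_ginv_12_iff; simp)+
  have "ginv {1,2} B \<subseteq> ginv {1} B" "ginv {1,2,3} B \<subseteq> ginv {1,2} B" "ginv {1,2,4} B \<subseteq> ginv {1,2} B"
    by (rule ginv_antimono; simp)+
  then show ?thesis
    unfolding M12 tset inj_image_subset_iff[OF inj] inj_image_eq_iff[OF inj]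
      image_Int[OF inj, symmetric] image_is_empty
    unfolding set_eq_subset Int_iffs full_rank_iffs
      ginv_12_subset_ginv_13_iff ginv_12_subset_ginv_14_iff
    using nonzero_if_full_rank[of B] ginv_Int_ginv_nonempty[of "{1,2}" B]
    by (intro conjI) (auto intro: imageI simp: mpinv_mem_ginv)
qed

end
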